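(* Let $\mathbf V$ be a variety of $\mathscr J$-trivial monoids. Then $A_0^1\notin\mathbf V$ if and only if $\mathbf V$ is a variety of aperiodic monoids with commuting idempotents (i.e., in every monoid of $\mathbf V$ all subgroups are trivial and any two idempotents commute).
   Context: A monoid $S$ is $\mathscr J$-trivial if $SaS=SbS$ implies $a=b$. $A_0=\langle e,f\mid e^2=e,\ f^2=f,\ fe=0\rangle=\{e,f,ef,0\}$ and $A_0^1$ is $A_0$ with a new identity element adjoined. *)

theory Defs
  imports "HOL-Algebra.Group"
begin

section \<open>Monoid identities and varieties (Birkhoff: variety = class of models of identities)\<close>

type_synonym word = "nat list"

definition word_eval :: "('a, 'b) monoid_scheme \<Rightarrow> (nat \<Rightarrow> 'a) \<Rightarrow> word \<Rightarrow> 'a" where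
  "word_eval M \<sigma> w = foldr (\<lambda>x acc. \<sigma> x \<otimes>\<^bsub>M\<^esub> acc) w \<one>\<^bsub>M\<^esub>"

definition satisfies_id :: "('a, 'b) monoid_scheme \<Rightarrow> word \<times> word \<Rightarrow> bool" where
  "satisfies_id M uv \<longleftrightarrow>
     (\<forall>\<sigma>. (\<forall>x. \<sigma> x \<in> carrier M) \<longrightarrow> word_eval M \<sigma> (fst uv) = word_eval M \<sigma> (snd uv))"

definition in_variety :: "(word \<times> word) set \<Rightarrow> ('a, 'b) monoid_scheme \<Rightarrow> bool" where
  "in_variety \<Sigma> M \<longleftrightarrow> monoid M \<and> (\<forall>uv\<in>\<Sigma>. satisfies_id M uv)"

definition J_trivial :: "('a, 'b) monoid_scheme \<Rightarrow> bool" where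
  "J_trivial M \<longleftrightarrow> (\<forall>a\<in>carrier M. \<forall>b\<in>carrier M.
     {x \<otimes>\<^bsub>M\<^esub> a \<otimes>\<^bsub>M\<^esub> y | x y. x \<in> carrier M \<and> y \<in> carrier M} =
     {x \<otimes>\<^bsub>M\<^esub> b \<otimes>\<^bsub>M\<^esub> y | x y. x \<in> carrier M \<and> y \<in> carrier M} \<longrightarrow> a = b)"

definition aperiodic :: "('a, 'b) monoid_scheme \<Rightarrow> bool" where
  "aperiodic M \<longleftrightarrow> (\<forall>H e. H \<subseteq> carrier M \<and>
     group \<lparr>carrier = H, mult = mult M, one = e\<rparr> \<longrightarrow> H = {e})"

definition commuting_idempotents :: "('a, 'b) monoid_scheme \<Rightarrow> bool" where
  "commuting_idempotents M \<longleftrightarrow> (\<forall>e\<in>carrier M. \<forall>f\<in>carrier M.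
     e \<otimes>\<^bsub>M\<^esub> e = e \<and> f \<otimes>\<^bsub>M\<^esub> f = f \<longrightarrow> e \<otimes>\<^bsub>M\<^esub> f = f \<otimes>\<^bsub>M\<^esub> e)"

datatype a0 = I | E | F | EF | Z

fun a0_mult :: "a0 \<Rightarrow> a0 \<Rightarrow> a0" where
  "a0_mult I x = x"
| "a0_mult x I = x"
| "a0_mult E E = E"
| "a0_mult E F = EF"
| "a0_mult E EF = EF"
| "a0_mult F F = F"
| "a0_mult EF F = EF"
| "a0_mult _ _ = Z"

definition A0_1 :: "a0 monoid" where
  "A0_1 = \<lparr>carrier = UNIV, mult = a0_mult, one = I\<rparr>"

end

theory Submission
  imports Defs "HOL-Library.Equipollence"
begin

text \<open>In a \<open>\<J>\<close>-trivial monoid two idempotents \<open>e, f\<close> with \<open>ef \<noteq> fe\<close> generate different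
  principal ideals, so after swapping them \<open>ef \<notin> M(fe)M\<close>. Then \<open>{1, e, f, ef} \<union> M(fe)M\<close> is a
  submonoid which maps onto \<open>A\<^sub>0\<^sup>1\<close> by collapsing the ideal \<open>M(fe)M\<close> to \<open>0\<close>; thus \<open>A\<^sub>0\<^sup>1\<close> divides
  a monoid of the variety and belongs to it. Conversely \<open>A\<^sub>0\<^sup>1\<close> itself has the non-commuting
  idempotents \<open>e, f\<close>, and a copy of it lives on any infinite type. Aperiodicity is automatic:
  all elements of a subgroup generate the same principal ideal.\<close>

lemma word_eval_Nil [simp]: "word_eval M \<sigma> [] = \<one>\<^bsub>M\<^esub>"
  by (simp add: word_eval_def)

lemma word_eval_Cons [simp]: "word_eval M \<sigma> (x # w) = \<sigma> x \<otimes>\<^bsub>M\<^esub> word_eval M \<sigma> w"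
  by (simp add: word_eval_def)

lemma (in submonoid) word_eval_closed: "(\<And>x. \<sigma> x \<in> H) \<Longrightarrow> word_eval G \<sigma> w \<in> H"
  by (induction w) simp_all

definition monoid_divides :: "('b, 'd) monoid_scheme \<Rightarrow> ('a, 'c) monoid_scheme \<Rightarrow> bool" where
  "monoid_divides N M \<longleftrightarrow> (\<exists>S \<phi>. submonoid S M \<and> \<phi> \<in> hom (M\<lparr>carrier := S\<rparr>) N \<and>
     \<phi> ` S = carrier N \<and> \<phi> \<one>\<^bsub>M\<^esub> = \<one>\<^bsub>N\<^esub>)"

lemma word_eval_hom:
  assumes "submonoid S M" and \<phi>: "\<phi> \<in> hom (M\<lparr>carrier := S\<rparr>) N" "\<phi> \<one>\<^bsub>M\<^esub> = \<one>\<^bsub>N\<^esub>"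
    and \<sigma>: "\<And>x. \<sigma> x \<in> S"
  shows "\<phi> (word_eval M \<sigma> w) = word_eval N (\<phi> \<circ> \<sigma>) w"
proof (induction w)
  case (Cons x w)
  have "word_eval M \<sigma> w \<in> S"
    using submonoid.word_eval_closed[OF \<open>submonoid S M\<close> \<sigma>] .
  then show ?case
    using Cons \<phi>(1) \<sigma> by (simp add: hom_def)
qed (simp add: \<phi>(2))

lemma satisfies_id_divides:
  fixes N :: "('b, 'd) monoid_scheme"
  assumes "monoid_divides N M" and "satisfies_id M uv"
  shows "satisfies_id N uv"
  unfolding satisfies_id_def
proof (intro allI impI)
  obtain S \<phi> where S: "submonoid S M" and \<phi>: "\<phi> \<in> hom (M\<lparr>carrier := S\<rparr>) N"
    "\<phi> ` S = carrier N" "\<phi> \<one>\<^bsub>M\<^esub> = \<one>\<^bsub>N\<^esub>"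
    using assms(1) by (auto simp: monoid_divides_def)
  fix \<tau> :: "nat \<Rightarrow> 'b" assume \<tau>: "\<forall>x. \<tau> x \<in> carrier N"
  define \<sigma> where "\<sigma> = (\<lambda>x. inv_into S \<phi> (\<tau> x))"
  have \<sigma>: "\<sigma> x \<in> S" and \<tau>_eq: "\<tau> = \<phi> \<circ> \<sigma>" for x
    using \<tau> \<phi>(2) by (auto simp: \<sigma>_def inv_into_into f_inv_into_f)
  have "\<sigma> x \<in> carrier M" for x
    using \<sigma> submonoid.subset[OF S] by blast
  then have "word_eval M \<sigma> (fst uv) = word_eval M \<sigma> (snd uv)"
    using assms(2) by (simp add: satisfies_id_def)
  moreover have "\<phi> (word_eval M \<sigma> w) = word_eval N \<tau> w" for w
    using word_eval_hom[OF S \<phi>(1,3)] \<sigma> by (simp add: \<tau>_eq)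
  ultimately show "word_eval N \<tau> (fst uv) = word_eval N \<tau> (snd uv)"
    by metis
qed

lemma in_variety_divides:
  "in_variety \<Sigma> M \<Longrightarrow> monoid N \<Longrightarrow> monoid_divides N M \<Longrightarrow> in_variety \<Sigma> N"
  by (auto simp: in_variety_def intro: satisfies_id_divides)

definition principal_ideal :: "('a, 'b) monoid_scheme \<Rightarrow> 'a \<Rightarrow> 'a set" where
  "principal_ideal M a = {x \<otimes>\<^bsub>M\<^esub> a \<otimes>\<^bsub>M\<^esub> y | x y. x \<in> carrier M \<and> y \<in> carrier M}"

lemma J_trivial_iff_inj_on_principal_ideal:
  "J_trivial M \<longleftrightarrow> inj_on (principal_ideal M) (carrier M)"
  by (simp add: J_trivial_def principal_ideal_def inj_on_def)

context monoid
begin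

lemma principal_ideal_memI:
  "x \<in> carrier G \<Longrightarrow> y \<in> carrier G \<Longrightarrow> x \<otimes> a \<otimes> y \<in> principal_ideal G a"
  by (auto simp: principal_ideal_def)

lemma principal_ideal_self: "a \<in> carrier G \<Longrightarrow> a \<in> principal_ideal G a"
  using principal_ideal_memI[of \<one> \<one> a] by simp

lemma principal_ideal_subset: "a \<in> carrier G \<Longrightarrow> principal_ideal G a \<subseteq> carrier G"
  by (auto simp: principal_ideal_def)

lemma principal_ideal_mult_left:
  assumes "a \<in> carrier G" "m \<in> carrier G" "t \<in> principal_ideal G a"
  shows "m \<otimes> t \<in> principal_ideal G a"
proof -
  obtain x y where "x \<in> carrier G" "y \<in> carrier G" "t = x \<otimes> a \<otimes> y"
    using assms(3) by (auto simp: principal_ideal_def)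
  then show ?thesis
    using assms principal_ideal_memI[of "m \<otimes> x" y a] by (simp add: m_assoc)
qed

lemma principal_ideal_mult_right:
  assumes "a \<in> carrier G" "m \<in> carrier G" "t \<in> principal_ideal G a"
  shows "t \<otimes> m \<in> principal_ideal G a"
proof -
  obtain x y where "x \<in> carrier G" "y \<in> carrier G" "t = x \<otimes> a \<otimes> y"
    using assms(3) by (auto simp: principal_ideal_def)
  then show ?thesis
    using assms principal_ideal_memI[of x "y \<otimes> m" a] by (simp add: m_assoc)
qed

lemma principal_ideal_mono:
  assumes "a \<in> carrier G" "b \<in> principal_ideal G a"
  shows "principal_ideal G b \<subseteq> principal_ideal G a"
proof
  fix t assume "t \<in> principal_ideal G b"
  then obtain x y where "x \<in> carrier G" "y \<in> carrier G" "t = x \<otimes> b \<otimes> y"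
    by (auto simp: principal_ideal_def)
  moreover have "b \<in> carrier G"
    using assms principal_ideal_subset by blast
  ultimately show "t \<in> principal_ideal G a"
    using assms by (simp add: principal_ideal_mult_left principal_ideal_mult_right)
qed

lemma J_trivial_antisym:
  assumes "J_trivial G" "a \<in> carrier G" "b \<in> carrier G"
    and "a \<in> principal_ideal G b" "b \<in> principal_ideal G a"
  shows "a = b"
  using assms principal_ideal_mono[of a b] principal_ideal_mono[of b a]
  by (auto simp: J_trivial_iff_inj_on_principal_ideal dest: inj_onD)

end

lemma J_trivial_imp_aperiodic:
  assumes "monoid M" "J_trivial M"
  shows "aperiodic M"
  unfolding aperiodic_def
proof (intro allI impI, elim conjE)
  fix H e
  assume H: "H \<subseteq> carrier M" and "group \<lparr>carrier = H, mult = mult M, one = e\<rparr>"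
  interpret M: monoid M by fact
  interpret H: group "\<lparr>carrier = H, mult = mult M, one = e\<rparr>" by fact
  have e: "e \<in> H"
    using H.one_closed by simp
  have "h = e" if h: "h \<in> H" for h
  proof -
    obtain h' where h': "h' \<in> H" "h' \<otimes>\<^bsub>M\<^esub> h = e"
      using H.l_inv_ex[of h] h by auto
    have in_M: "h \<in> carrier M" "h' \<in> carrier M" "e \<in> carrier M"
      using h h' e H by auto
    have "h = \<one>\<^bsub>M\<^esub> \<otimes>\<^bsub>M\<^esub> e \<otimes>\<^bsub>M\<^esub> h"
      using H.l_one[of h] h in_M by simp
    then have "h \<in> principal_ideal M e"
      using M.principal_ideal_memI[of "\<one>\<^bsub>M\<^esub>" h e] in_M by simp
    moreover have "e \<in> principal_ideal M h"
      using M.principal_ideal_memI[of h' "\<one>\<^bsub>M\<^esub>" h] h' in_M by simp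
    ultimately show "h = e"
      using M.J_trivial_antisym[OF \<open>J_trivial M\<close>] in_M by blast
  qed
  with e show "H = {e}" by blast
qed

lemma a0_mult_assoc: "a0_mult (a0_mult x y) z = a0_mult x (a0_mult y z)"
  by (cases x; cases y; cases z) simp_all

lemma a0_mult_I_right [simp]: "a0_mult x I = x"
  by (cases x) simp_all

lemma a0_mult_Z [simp]: "a0_mult x Z = Z" "a0_mult Z x = Z"
  by (cases x; simp)+

lemma monoid_A0_1: "monoid A0_1"
  by unfold_locales (auto simp: A0_1_def a0_mult_assoc)

lemma not_commuting_idempotents_A0_1: "\<not> commuting_idempotents A0_1"
proof
  assume "commuting_idempotents A0_1"
  then have "\<forall>e f. a0_mult e e = e \<and> a0_mult f f = f \<longrightarrow> a0_mult e f = a0_mult f e"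
    by (simp add: commuting_idempotents_def A0_1_def)
  from this[rule_format, of E F] show False
    by simp
qed

lemma finite_UNIV_a0: "finite (UNIV :: a0 set)"
proof -
  have "(UNIV :: a0 set) = {I, E, F, EF, Z}"
    using a0.exhaust by auto
  then show ?thesis
    by (metis finite.emptyI finite_insert)
qed

locale separated_idempotents = monoid +
  fixes a b
  assumes a_closed [simp]: "a \<in> carrier G" and b_closed [simp]: "b \<in> carrier G"
    and a_idem: "a \<otimes> a = a" and b_idem: "b \<otimes> b = b"
    and ab_notin_ideal: "a \<otimes> b \<notin> principal_ideal G (b \<otimes> a)"
begin

abbreviation zero_ideal :: "'a set" where
  "zero_ideal \<equiv> principal_ideal G (b \<otimes> a)"

lemma zero_ideal_mult:
  assumes "t \<in> zero_ideal" "m \<in> carrier G"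
  shows "m \<otimes> t \<in> zero_ideal" "t \<otimes> m \<in> zero_ideal"
  using assms by (simp_all add: principal_ideal_mult_left principal_ideal_mult_right)

lemma zero_ideal_subset: "zero_ideal \<subseteq> carrier G"
  by (simp add: principal_ideal_subset)

lemma ba_in_zero_ideal: "b \<otimes> a \<in> zero_ideal"
  by (simp add: principal_ideal_self)

lemma notin_zero_ideal: "\<one> \<notin> zero_ideal" "a \<notin> zero_ideal" "b \<notin> zero_ideal"
  using ab_notin_ideal zero_ideal_mult[of a b] zero_ideal_mult[of b a] zero_ideal_mult[of \<one> a]
  by auto

lemma a_idem_left: "x \<in> carrier G \<Longrightarrow> a \<otimes> (a \<otimes> x) = a \<otimes> x"
  by (simp flip: m_assoc add: a_idem)

lemma products_in_zero_ideal:
  "a \<otimes> (b \<otimes> a) \<in> zero_ideal" "b \<otimes> (a \<otimes> b) \<in> zero_ideal" "a \<otimes> (b \<otimes> (a \<otimes> b)) \<in> zero_ideal"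
proof -
  show aba: "a \<otimes> (b \<otimes> a) \<in> zero_ideal"
    using zero_ideal_mult(1)[OF ba_in_zero_ideal, of a] by simp
  show "b \<otimes> (a \<otimes> b) \<in> zero_ideal"
    using zero_ideal_mult(2)[OF ba_in_zero_ideal, of b] by (simp add: m_assoc)
  show "a \<otimes> (b \<otimes> (a \<otimes> b)) \<in> zero_ideal"
    using zero_ideal_mult(2)[OF aba, of b] by (simp add: m_assoc)
qed

lemma distinct_generators:
  "\<one> \<noteq> a" "\<one> \<noteq> b" "\<one> \<noteq> a \<otimes> b" "a \<noteq> b" "a \<noteq> a \<otimes> b" "b \<noteq> a \<otimes> b"
proof -
  have ab_ba: "a \<otimes> b \<noteq> b \<otimes> a"
    using ab_notin_ideal ba_in_zero_ideal by metis
  then show "\<one> \<noteq> a" "\<one> \<noteq> b" "a \<noteq> b"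
    using a_idem by auto
  show "\<one> \<noteq> a \<otimes> b"
  proof
    assume one: "\<one> = a \<otimes> b"
    have "a = a \<otimes> (a \<otimes> b)"
      by (simp flip: one)
    also have "\<dots> = \<one>"
      by (simp add: a_idem_left one)
    finally show False
      using \<open>\<one> \<noteq> a\<close> by simp
  qed
  show "a \<noteq> a \<otimes> b"
  proof
    assume "a = a \<otimes> b"
    then have "a = a \<otimes> (b \<otimes> a)"
      using a_idem by (metis a_closed b_closed m_assoc)
    then show False
      using notin_zero_ideal(2) products_in_zero_ideal(1) by simp
  qed
  show "b \<noteq> a \<otimes> b"
  proof
    assume "b = a \<otimes> b"
    then have "b = b \<otimes> (a \<otimes> b)"
      using b_idem by simp
    then show False
      using notin_zero_ideal(3) products_in_zero_ideal(2) by simp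
  qed
qed

definition A0_submonoid :: "'a set" where
  "A0_submonoid = {\<one>, a, b, a \<otimes> b} \<union> zero_ideal"

definition A0_collapse :: "'a \<Rightarrow> a0" where
  "A0_collapse m =
     (if m = \<one> then I else if m = a then E else if m = b then F else if m = a \<otimes> b then EF else Z)"

lemma A0_collapse_simps [simp]:
  "A0_collapse \<one> = I" "A0_collapse a = E" "A0_collapse b = F" "A0_collapse (a \<otimes> b) = EF"
  "t \<in> zero_ideal \<Longrightarrow> A0_collapse t = Z"
  using distinct_generators notin_zero_ideal ab_notin_ideal by (auto simp: A0_collapse_def)

lemma A0_submonoid_subset: "A0_submonoid \<subseteq> carrier G"
  using zero_ideal_subset by (auto simp: A0_submonoid_def)

lemma A0_submonoid_mult:
  assumes "x \<in> A0_submonoid" "y \<in> A0_submonoid"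
  shows "x \<otimes> y \<in> A0_submonoid \<and> A0_collapse (x \<otimes> y) = a0_mult (A0_collapse x) (A0_collapse y)"
proof (cases "x \<in> zero_ideal \<or> y \<in> zero_ideal")
  case True
  moreover have "x \<in> carrier G" "y \<in> carrier G"
    using assms A0_submonoid_subset by auto
  ultimately have "x \<otimes> y \<in> zero_ideal"
    using zero_ideal_mult by blast
  then show ?thesis
    using True by (auto simp: A0_submonoid_def)
next
  case False
  then have "x \<in> {\<one>, a, b, a \<otimes> b}" "y \<in> {\<one>, a, b, a \<otimes> b}"
    using assms by (auto simp: A0_submonoid_def)
  \<comment> \<open>16 products; those that are \<open>0\<close> in \<open>A\<^sub>0\<^sup>1\<close> contain the factor \<open>ba\<close>\<close>
  then show ?thesis
    using ba_in_zero_ideal products_in_zero_ideal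
    by (auto simp: A0_submonoid_def a_idem b_idem a_idem_left m_assoc)
qed

lemma submonoid_A0_submonoid: "submonoid A0_submonoid G"
  by unfold_locales (simp_all add: A0_submonoid_subset A0_submonoid_mult, simp add: A0_submonoid_def)

lemma A0_divides: "monoid_divides A0_1 G"
  unfolding monoid_divides_def
proof (intro exI conjI)
  show "A0_collapse \<in> hom (G\<lparr>carrier := A0_submonoid\<rparr>) A0_1"
    by (auto simp: hom_def A0_1_def A0_submonoid_mult)
  have "x \<in> A0_collapse ` A0_submonoid" for x
    using ba_in_zero_ideal
    by (cases x) (auto simp: A0_submonoid_def image_iff intro: bexI[of _ "b \<otimes> a"])
  then show "A0_collapse ` A0_submonoid = carrier A0_1"
    by (auto simp: A0_1_def)
qed (simp_all add: submonoid_A0_submonoid A0_1_def)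

end

lemma A0_divides_if_not_commuting_idempotents:
  assumes "monoid M" "J_trivial M" "\<not> commuting_idempotents M"
  shows "monoid_divides A0_1 M"
proof -
  interpret monoid M by fact
  obtain e f where ef: "e \<in> carrier M" "f \<in> carrier M" "e \<otimes>\<^bsub>M\<^esub> e = e" "f \<otimes>\<^bsub>M\<^esub> f = f"
    "e \<otimes>\<^bsub>M\<^esub> f \<noteq> f \<otimes>\<^bsub>M\<^esub> e"
    using assms(3) by (auto simp: commuting_idempotents_def)
  then have "e \<otimes>\<^bsub>M\<^esub> f \<notin> principal_ideal M (f \<otimes>\<^bsub>M\<^esub> e) \<or>
      f \<otimes>\<^bsub>M\<^esub> e \<notin> principal_ideal M (e \<otimes>\<^bsub>M\<^esub> f)"
    using J_trivial_antisym[OF assms(2)] by auto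
  then show ?thesis
  proof
    assume "e \<otimes>\<^bsub>M\<^esub> f \<notin> principal_ideal M (f \<otimes>\<^bsub>M\<^esub> e)"
    then interpret separated_idempotents M e f
      using ef by unfold_locales
    show ?thesis
      by (rule A0_divides)
  next
    assume "f \<otimes>\<^bsub>M\<^esub> e \<notin> principal_ideal M (e \<otimes>\<^bsub>M\<^esub> f)"
    then interpret separated_idempotents M f e
      using ef by unfold_locales
    show ?thesis
      by (rule A0_divides)
  qed
qed

definition image_monoid :: "('a \<Rightarrow> 'b) \<Rightarrow> ('a, 'c) monoid_scheme \<Rightarrow> 'b monoid" where
  "image_monoid h N = \<lparr>carrier = h ` carrier N,
     mult = \<lambda>x y. h (inv_into (carrier N) h x \<otimes>\<^bsub>N\<^esub> inv_into (carrier N) h y),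
     one = h \<one>\<^bsub>N\<^esub>\<rparr>"

context
  fixes h :: "'a \<Rightarrow> 'b" and N :: "('a, 'c) monoid_scheme"
  assumes N: "monoid N" and h: "inj_on h (carrier N)"
begin

interpretation monoid N by (fact N)

lemma monoid_image_monoid: "monoid (image_monoid h N)"
  by unfold_locales (auto simp: image_monoid_def h m_assoc)

lemma image_monoid_divides: "monoid_divides (image_monoid h N) N"
  unfolding monoid_divides_def
proof (intro exI conjI)
  show "submonoid (carrier N) N"
    by unfold_locales simp_all
  show "h \<in> hom (N\<lparr>carrier := carrier N\<rparr>) (image_monoid h N)"
    by (auto simp: hom_def image_monoid_def h)
qed (simp_all add: image_monoid_def)

lemma in_variety_image_monoid: "in_variety \<Sigma> N \<Longrightarrow> in_variety \<Sigma> (image_monoid h N)"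
  using in_variety_divides monoid_image_monoid image_monoid_divides by blast

lemma commuting_idempotents_image_monoidD:
  assumes "commuting_idempotents (image_monoid h N)"
  shows "commuting_idempotents N"
  unfolding commuting_idempotents_def
proof (intro ballI impI)
  fix e f assume "e \<in> carrier N" "f \<in> carrier N" "e \<otimes>\<^bsub>N\<^esub> e = e \<and> f \<otimes>\<^bsub>N\<^esub> f = f"
  then have "h (e \<otimes>\<^bsub>N\<^esub> f) = h (f \<otimes>\<^bsub>N\<^esub> e)"
    using assms by (auto simp: commuting_idempotents_def image_monoid_def h)
  then show "e \<otimes>\<^bsub>N\<^esub> f = f \<otimes>\<^bsub>N\<^esub> e"
    using h \<open>e \<in> carrier N\<close> \<open>f \<in> carrier N\<close> by (simp add: inj_on_eq_iff)
qed

end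

theorem fact6p4:
  fixes \<Sigma> :: "(word \<times> word) set"
  assumes inf: "infinite (UNIV :: 'a set)"
    and Jtriv: "\<forall>M :: 'a monoid. in_variety \<Sigma> M \<longrightarrow> J_trivial M"
  shows "(\<not> in_variety \<Sigma> A0_1) \<longleftrightarrow>
         (\<forall>M :: 'a monoid. in_variety \<Sigma> M \<longrightarrow> aperiodic M \<and> commuting_idempotents M)"
proof
  assume A0_notin: "\<not> in_variety \<Sigma> A0_1"
  show "\<forall>M :: 'a monoid. in_variety \<Sigma> M \<longrightarrow> aperiodic M \<and> commuting_idempotents M"
  proof (intro allI impI conjI)
    fix M :: "'a monoid"
    assume M: "in_variety \<Sigma> M"
    then have "monoid M" "J_trivial M"
      using Jtriv by (auto simp: in_variety_def)
    then show "aperiodic M"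
      by (rule J_trivial_imp_aperiodic)
    show "commuting_idempotents M"
      using A0_divides_if_not_commuting_idempotents[OF \<open>monoid M\<close> \<open>J_trivial M\<close>]
        in_variety_divides[OF M monoid_A0_1] A0_notin by blast
  qed
next
  assume all: "\<forall>M :: 'a monoid. in_variety \<Sigma> M \<longrightarrow> aperiodic M \<and> commuting_idempotents M"
  obtain h :: "a0 \<Rightarrow> 'a" where "inj h"
    using finite_lepoll_infinite[OF inf finite_UNIV_a0] by (auto simp: lepoll_def)
  then have h: "inj_on h (carrier A0_1)"
    by (simp add: A0_1_def)
  show "\<not> in_variety \<Sigma> A0_1"
    using all in_variety_image_monoid[OF monoid_A0_1 h]
      commuting_idempotents_image_monoidD[OF monoid_A0_1 h] not_commuting_idempotents_A0_1
    by blast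
qed

end
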